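(* Let $\mathfrak n$ be a seven-dimensional two-step nilpotent real Lie algebra with an invariant scalar product $\langle\cdot,\cdot\rangle$ of index three. Then $\mathrm{ad}(\mathfrak n)$ is not contained in $\mathfrak g_{2(2)}$, where $\mathfrak g_{2(2)}$ is regarded as a subalgebra of $\mathfrak{so}(\mathfrak n,\langle\cdot,\cdot\rangle)\cong\mathfrak{so}_{4,3}$ (i.e. there is no three-form on $\mathfrak n$ of $\mathrm G_{2(2)}$-type compatible with $\langle\cdot,\cdot\rangle$ that is annihilated by $\mathrm{ad}(x)$ for all $x\in\mathfrak n$).
   Context: An invariant scalar product is a nondegenerate symmetric bilinear form satisfying $\langle[x,y],z\rangle=\langle x,[y,z]\rangle$; index three on a seven-dimensional space means signature $(4,3)$ or $(3,4)$. $\mathfrak{so}(\mathfrak n,\langle\cdot,\cdot\rangle)$ is the Lie algebra of endomorphisms skew-symmetric for $\langle\cdot,\cdot\rangle$. $\mathfrak g_{2(2)}$ is the Lie algebra of the split real form $\mathrm G_{2(2)}$ of $\mathrm G_2^{\mathbb C}$, which is the stabilizer subalgebra in $\mathfrak{so}_{4,3}$ of a certain (generic, split-type) three-form. A Lie algebra is two-step nilpotent if $[\mathfrak n,[\mathfrak n,\mathfrak n]]=0$ but $[\mathfrak n,\mathfrak n]\neq 0$. *)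

theory Defs
  imports "HOL-Analysis.Analysis"
begin

definition is_basis7 :: "(nat \<Rightarrow> 'a::real_vector) \<Rightarrow> bool" where
  "is_basis7 e \<longleftrightarrow> inj_on e {..<7} \<and> independent (e ` {..<7}) \<and> span (e ` {..<7}) = UNIV"

definition lie_bracket :: "('a::real_vector \<Rightarrow> 'a \<Rightarrow> 'a) \<Rightarrow> bool" where
  "lie_bracket br \<longleftrightarrow> bilinear br \<and> (\<forall>x. br x x = 0) \<and>
     (\<forall>x y z. br x (br y z) + br y (br z x) + br z (br x y) = 0)"

definition two_step_nilpotent :: "('a::real_vector \<Rightarrow> 'a \<Rightarrow> 'a) \<Rightarrow> bool" where
  "two_step_nilpotent br \<longleftrightarrow> (\<forall>x y z. br x (br y z) = 0) \<and> (\<exists>x y. br x y \<noteq> 0)"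

definition scalar_product :: "('a::real_vector \<Rightarrow> 'a \<Rightarrow> real) \<Rightarrow> bool" where
  "scalar_product B \<longleftrightarrow> bilinear B \<and> (\<forall>x y. B x y = B y x) \<and> (\<forall>x. (\<forall>y. B x y = 0) \<longrightarrow> x = 0)"

definition invariant_form :: "('a::real_vector \<Rightarrow> 'a \<Rightarrow> 'a) \<Rightarrow> ('a \<Rightarrow> 'a \<Rightarrow> real) \<Rightarrow> bool" where
  "invariant_form br B \<longleftrightarrow> (\<forall>x y z. B (br x y) z = B x (br y z))"

definition has_signature7 :: "('a::real_vector \<Rightarrow> 'a \<Rightarrow> real) \<Rightarrow> nat \<Rightarrow> nat \<Rightarrow> bool" where
  "has_signature7 B p q \<longleftrightarrow> p + q = 7 \<and> (\<exists>e. is_basis7 e \<and>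
     (\<forall>i<7. \<forall>j<7. i \<noteq> j \<longrightarrow> B (e i) (e j) = 0) \<and>
     (\<forall>i<7. B (e i) (e i) = 1 \<or> B (e i) (e i) = -1) \<and>
     card {i. i < 7 \<and> B (e i) (e i) = -1} = q)"

definition index_three :: "('a::real_vector \<Rightarrow> 'a \<Rightarrow> real) \<Rightarrow> bool" where
  "index_three B \<longleftrightarrow> has_signature7 B 4 3 \<or> has_signature7 B 3 4"

definition trilinear :: "('a::real_vector \<Rightarrow> 'a \<Rightarrow> 'a \<Rightarrow> real) \<Rightarrow> bool" where
  "trilinear \<phi> \<longleftrightarrow> (\<forall>b c. linear (\<lambda>a. \<phi> a b c)) \<and> (\<forall>a c. linear (\<lambda>b. \<phi> a b c))
      \<and> (\<forall>a b. linear (\<lambda>c. \<phi> a b c))"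

text \<open>Alternating extension of a single monomial e^{abc}.\<close>
definition alt3 :: "nat \<Rightarrow> nat \<Rightarrow> nat \<Rightarrow> nat \<Rightarrow> nat \<Rightarrow> nat \<Rightarrow> real" where
  "alt3 a b c i j k =
     (if (i,j,k) = (a,b,c) \<or> (i,j,k) = (b,c,a) \<or> (i,j,k) = (c,a,b) then 1
      else if (i,j,k) = (b,a,c) \<or> (i,j,k) = (a,c,b) \<or> (i,j,k) = (c,b,a) then -1 else 0)"

text \<open>Standard split G2 three-form (indices 0..6 for e1..e7):
  e123 - e145 - e167 - e246 + e257 + e347 + e356, whose stabiliser is g_2(2)
  and which induces the metric diag(1,1,1,-1,-1,-1,-1).\<close>
definition phi_split :: "nat \<Rightarrow> nat \<Rightarrow> nat \<Rightarrow> real" where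
  "phi_split i j k = alt3 0 1 2 i j k - alt3 0 3 4 i j k - alt3 0 5 6 i j k - alt3 1 3 5 i j k
      + alt3 1 4 6 i j k + alt3 2 3 6 i j k + alt3 2 4 5 i j k"

definition eta_split :: "nat \<Rightarrow> nat \<Rightarrow> real" where
  "eta_split i j = (if i = j then (if i < 3 then 1 else -1) else 0)"

definition g2_split_compatible :: "('a::real_vector \<Rightarrow> 'a \<Rightarrow> 'a \<Rightarrow> real) \<Rightarrow> ('a \<Rightarrow> 'a \<Rightarrow> real) \<Rightarrow> bool" where
  "g2_split_compatible \<phi> B \<longleftrightarrow> trilinear \<phi> \<and> (\<exists>e c. is_basis7 e \<and> c \<noteq> 0 \<and>
     (\<forall>i<7. \<forall>j<7. \<forall>k<7. \<phi> (e i) (e j) (e k) = phi_split i j k) \<and>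
     (\<forall>i<7. \<forall>j<7. B (e i) (e j) = c * eta_split i j))"

definition ad_invariant_form :: "('a::real_vector \<Rightarrow> 'a \<Rightarrow> 'a) \<Rightarrow> ('a \<Rightarrow> 'a \<Rightarrow> 'a \<Rightarrow> real) \<Rightarrow> bool" where
  "ad_invariant_form br \<phi> \<longleftrightarrow>
     (\<forall>x a b c. \<phi> (br x a) b c + \<phi> a (br x b) c + \<phi> a b (br x c) = 0)"

end

theory Submission
  imports Defs
begin

(* Invariance of B turns the structure constants B([x,y],z) into a three-form V, and in a basis
   adapted to the split form, ad(e_i) is the contraction of V with e_i, raised by the metric.
   The 35 components of V satisfy a linear system expressing that all these contractions lie in
   g_2(2); its only solution is V = 0, so the bracket vanishes, contradicting two-step
   nilpotency. *)

lemma lessThan_7_nat: "{..<7::nat} = {0, 1, 2, 3, 4, 5, 6}"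
  by (simp add: lessThan_nat_numeral lessThan_Suc insert_commute)

lemma all_less_7_nat:
  "(\<forall>i<(7::nat). P i) \<longleftrightarrow> P 0 \<and> P 1 \<and> P 2 \<and> P 3 \<and> P 4 \<and> P 5 \<and> P 6"
  by (metis lessThan_7_nat lessThan_iff insert_iff empty_iff)

lemma span_image_sum_coordinates:
  assumes "finite I" "inj_on e I" "v \<in> span (e ` I)"
  obtains u where "v = (\<Sum>k\<in>I. u k *\<^sub>R e k)"
proof -
  obtain u where "v = (\<Sum>w\<in>e ` I. u w *\<^sub>R w)"
    using assms span_finite[of "e ` I"] by auto
  also have "\<dots> = (\<Sum>k\<in>I. u (e k) *\<^sub>R e k)"
    using assms(2) by (simp add: sum.reindex)
  finally show ?thesis by (rule that)
qed

lemma linear_sum_scaleR_real: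
  fixes f :: "'a::real_vector \<Rightarrow> real"
  assumes "linear f"
  shows "f (\<Sum>k\<in>S. s k *\<^sub>R w k) = (\<Sum>k\<in>S. s k * f (w k))"
  using linear_sum[OF assms, of "\<lambda>k. s k *\<^sub>R w k" S] linear_scale[OF assms] by simp

lemma orthogonal_basis_expansion:
  fixes B :: "'a::real_vector \<Rightarrow> 'a \<Rightarrow> real"
  assumes "bilinear B" "finite I" "inj_on e I" "span (e ` I) = UNIV"
    and orth: "\<And>i j. i \<in> I \<Longrightarrow> j \<in> I \<Longrightarrow> i \<noteq> j \<Longrightarrow> B (e i) (e j) = 0"
    and nonisotropic: "\<And>i. i \<in> I \<Longrightarrow> B (e i) (e i) \<noteq> 0"
  shows "v = (\<Sum>k\<in>I. (B v (e k) / B (e k) (e k)) *\<^sub>R e k)"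
proof -
  obtain u where u: "v = (\<Sum>k\<in>I. u k *\<^sub>R e k)"
    using span_image_sum_coordinates assms(2-4) by blast
  have "B v (e m) = u m * B (e m) (e m)" if "m \<in> I" for m
  proof -
    have "linear (\<lambda>x. B x (e m))" using assms(1) by (simp add: bilinear_def)
    then have "B v (e m) = (\<Sum>k\<in>I. u k * B (e k) (e m))"
      unfolding u by (rule linear_sum_scaleR_real)
    also have "\<dots> = (\<Sum>k\<in>I. if k = m then u m * B (e m) (e m) else 0)"
      using orth that by (intro sum.cong) auto
    finally show ?thesis using that assms(2) by simp
  qed
  then show ?thesis
    using u nonisotropic by (simp cong: sum.cong)
qed

lemma split_metric_basis_expansion:
  fixes B :: "'a::real_vector \<Rightarrow> 'a \<Rightarrow> real"
  assumes "bilinear B" "is_basis7 e" "c \<noteq> 0"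
    and metric: "\<And>i j. i < 7 \<Longrightarrow> j < 7 \<Longrightarrow> B (e i) (e j) = c * eta_split i j"
  shows "v = (\<Sum>m<7. (eta_split m m * (B v (e m) / c)) *\<^sub>R e m)"
proof -
  have "v = (\<Sum>m<7. (B v (e m) / B (e m) (e m)) *\<^sub>R e m)"
    by (rule orthogonal_basis_expansion[OF assms(1)])
      (use assms in \<open>auto simp: is_basis7_def eta_split_def\<close>)
  also have "\<dots> = (\<Sum>m<7. (eta_split m m * (B v (e m) / c)) *\<^sub>R e m)"
    using metric by (intro sum.cong) (auto simp: eta_split_def)
  finally show ?thesis .
qed

lemma bilinear_eq_0_on_spanning_image:
  fixes f :: "'a::real_vector \<Rightarrow> 'b::real_vector \<Rightarrow> 'c::real_vector"
  assumes "bilinear f" "span (e ` I) = UNIV" "span (e' ` J) = UNIV"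
    and "\<And>i j. i \<in> I \<Longrightarrow> j \<in> J \<Longrightarrow> f (e i) (e' j) = 0"
  shows "f x y = 0"
proof -
  have "bilinear (\<lambda>(_::'a) (_::'b). 0::'c)"
    by (simp add: bilinear_def linear_zero)
  then show ?thesis
    by (rule bilinear_eq[OF assms(1), of _ UNIV "e ` I" UNIV "e' ` J"]) (use assms in auto)
qed

lemma trilinear_sum:
  assumes "trilinear \<phi>"
  shows "\<phi> (\<Sum>k\<in>S. s k *\<^sub>R w k) y z = (\<Sum>k\<in>S. s k * \<phi> (w k) y z)"
    and "\<phi> x (\<Sum>k\<in>S. s k *\<^sub>R w k) z = (\<Sum>k\<in>S. s k * \<phi> x (w k) z)"
    and "\<phi> x y (\<Sum>k\<in>S. s k *\<^sub>R w k) = (\<Sum>k\<in>S. s k * \<phi> x y (w k))"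
  using assms linear_sum_scaleR_real unfolding trilinear_def by blast+

lemma lie_bracket_antisym:
  assumes "lie_bracket br"
  shows "br y x = - br x y"
proof -
  have bl: "bilinear br" and alt: "\<And>x. br x x = 0"
    using assms by (auto simp: lie_bracket_def)
  have "br (x + y) (x + y) = br x x + br x y + (br y x + br y y)"
    by (simp add: bilinear_ladd[OF bl] bilinear_radd[OF bl])
  then have "br x y + br y x = 0" using alt by simp
  then show ?thesis by (metis add.commute eq_neg_iff_add_eq_0)
qed

lemma invariant_form_bracket_alternating:
  assumes "lie_bracket br" "scalar_product B" "invariant_form br B"
  shows "B (br y x) z = - B (br x y) z"
    and "B (br x y) z = B (br y z) x"
proof -
  have "bilinear B" and symm: "\<And>x y. B x y = B y x"
    using assms(2) by (auto simp: scalar_product_def)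
  show "B (br y x) z = - B (br x y) z"
    by (simp add: lie_bracket_antisym[OF assms(1), of x] bilinear_lneg[OF \<open>bilinear B\<close>])
  show "B (br x y) z = B (br y z) x"
    using assms(3) symm unfolding invariant_form_def by metis
qed

(* The matrix form of g_2(2): A a m is the e_m-coordinate of the image of e_a. *)
definition stabilises_phi_split :: "(nat \<Rightarrow> nat \<Rightarrow> real) \<Rightarrow> bool" where
  "stabilises_phi_split A \<longleftrightarrow> (\<forall>a<7. \<forall>b<7. \<forall>d<7.
     (\<Sum>m<7. A a m * phi_split m b d) + (\<Sum>m<7. A b m * phi_split a m d)
       + (\<Sum>m<7. A d m * phi_split a b m) = 0)"

lemma stabilises_phi_split_if_annihilates:
  assumes "trilinear \<phi>"
    and phi: "\<And>i j k. i < 7 \<Longrightarrow> j < 7 \<Longrightarrow> k < 7 \<Longrightarrow> \<phi> (e i) (e j) (e k) = phi_split i j k"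
    and annihilates: "\<And>a b c. \<phi> (X a) b c + \<phi> a (X b) c + \<phi> a b (X c) = 0"
    and matrix: "\<And>a. a < 7 \<Longrightarrow> X (e a) = (\<Sum>m<7. A a m *\<^sub>R e m)"
  shows "stabilises_phi_split A"
  unfolding stabilises_phi_split_def
proof (intro allI impI)
  fix a b d :: nat
  assume "a < 7" "b < 7" "d < 7"
  with annihilates[of "e a" "e b" "e d"] show
    "(\<Sum>m<7. A a m * phi_split m b d) + (\<Sum>m<7. A b m * phi_split a m d)
       + (\<Sum>m<7. A d m * phi_split a b m) = 0"
    by (simp add: matrix trilinear_sum[OF assms(1)] phi)
qed

lemma alternating_form_vanishes_if_contractions_stabilise:
  fixes V :: "nat \<Rightarrow> nat \<Rightarrow> nat \<Rightarrow> real"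
  assumes swap: "\<And>i j k. V j i k = - V i j k"
    and cycle: "\<And>i j k. V i j k = V j k i"
    and stab: "\<And>x. x < 7 \<Longrightarrow> stabilises_phi_split (\<lambda>a m. eta_split m m * V x a m)"
  shows "\<forall>i<7. \<forall>j<7. \<forall>k<7. V i j k = 0"
proof -
  have sort12: "V i j k = - V j i k" if "j < i" for i j k using swap[of j i k] by simp
  have sort23: "V i j k = - V i k j" if "k < j" for i j k using swap cycle by metis
  have diag12: "V i i k = 0" for i k using swap[of i i k] by simp
  have diag23: "V i j j = 0" for i j using diag12[of j i] cycle[of i j j] by simp
  have eq: "(\<Sum>m<7. eta_split m m * V x a m * phi_split m b d)
         + (\<Sum>m<7. eta_split m m * V x b m * phi_split a m d)
         + (\<Sum>m<7. eta_split m m * V x d m * phi_split a b m) = 0"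
    if "x < 7" "a < 7" "b < 7" "d < 7" for x a b d
    using stab[OF that(1)] that unfolding stabilises_phi_split_def by blast
  note [simp] = lessThan_7_nat phi_split_def alt3_def eta_split_def
  \<comment> \<open>35 instances whose restriction to the 35 components with i < j < k has full rank\<close>
  note eqs = eq[of 0 0 1 3] eq[of 0 0 1 4] eq[of 0 0 1 5] eq[of 0 0 1 6] eq[of 0 0 3 5]
    eq[of 0 0 3 6] eq[of 1 0 1 3] eq[of 1 0 1 4] eq[of 1 0 1 5] eq[of 1 0 1 6]
    eq[of 1 0 3 5] eq[of 1 1 3 6] eq[of 2 0 1 3] eq[of 2 0 1 4] eq[of 2 0 1 5]
    eq[of 2 0 1 6] eq[of 2 0 3 6] eq[of 2 1 3 6] eq[of 3 0 1 3] eq[of 3 0 1 4]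
    eq[of 3 0 1 5] eq[of 3 0 3 5] eq[of 3 0 3 6] eq[of 3 1 3 6] eq[of 4 0 1 3]
    eq[of 4 0 1 4] eq[of 4 1 3 6] eq[of 5 0 1 3] eq[of 0 1 3 6] eq[of 1 0 3 6]
    eq[of 2 0 3 5] eq[of 3 0 1 6] eq[of 4 0 1 5] eq[of 5 0 1 4] eq[of 6 0 1 3]
  note sorted_eqs = eqs[simplified, simplified sort12 sort23 diag12 diag23]
  show ?thesis
    unfolding all_less_7_nat
  proof (simp add: sort12 sort23 diag12 diag23, intro conjI)
  qed (use sorted_eqs in linarith)+
qed

theorem lemma3p8:
  fixes br :: "'a::euclidean_space \<Rightarrow> 'a \<Rightarrow> 'a"
    and B :: "'a \<Rightarrow> 'a \<Rightarrow> real"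
  assumes "DIM('a) = 7"
    and "lie_bracket br"
    and "two_step_nilpotent br"
    and "scalar_product B"
    and "invariant_form br B"
    and "index_three B"
  shows "\<not> (\<exists>\<phi>. g2_split_compatible \<phi> B \<and> ad_invariant_form br \<phi>)"
proof
  assume "\<exists>\<phi>. g2_split_compatible \<phi> B \<and> ad_invariant_form br \<phi>"
  then obtain \<phi> e c where tri: "trilinear \<phi>" and basis: "is_basis7 e" and "c \<noteq> 0"
    and phi: "\<And>i j k. i < 7 \<Longrightarrow> j < 7 \<Longrightarrow> k < 7 \<Longrightarrow> \<phi> (e i) (e j) (e k) = phi_split i j k"
    and metric: "\<And>i j. i < 7 \<Longrightarrow> j < 7 \<Longrightarrow> B (e i) (e j) = c * eta_split i j"
    and ad: "ad_invariant_form br \<phi>"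
    unfolding g2_split_compatible_def by blast
  have "bilinear B" and "bilinear br"
    using assms(2,4) by (auto simp: scalar_product_def lie_bracket_def)
  define V where "V i j k = B (br (e i) (e j)) (e k) / c" for i j k
  have swap: "V j i k = - V i j k" for i j k
    unfolding V_def
    by (simp add: invariant_form_bracket_alternating(1)[OF assms(2,4,5),
          where x = "e i" and y = "e j"])
  have cycle: "V i j k = V j k i" for i j k
    unfolding V_def
    by (simp add: invariant_form_bracket_alternating(2)[OF assms(2,4,5),
          where x = "e i" and y = "e j"])
  have ad_matrix: "br (e x) (e a) = (\<Sum>m<7. (eta_split m m * V x a m) *\<^sub>R e m)" for x a
    unfolding V_def by (rule split_metric_basis_expansion[OF \<open>bilinear B\<close> basis \<open>c \<noteq> 0\<close> metric])
  then have "stabilises_phi_split (\<lambda>a m. eta_split m m * V x a m)" for x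
    using ad unfolding ad_invariant_form_def
    by (intro stabilises_phi_split_if_annihilates[OF tri phi, where X = "br (e x)"]) simp_all
  then have "\<forall>i<7. \<forall>j<7. \<forall>k<7. V i j k = 0"
    using alternating_form_vanishes_if_contractions_stabilise swap cycle by blast
  then have "br (e i) (e j) = 0" if "i < 7" "j < 7" for i j
    using ad_matrix that by simp
  then have "br x y = 0" for x y
    using bilinear_eq_0_on_spanning_image[OF \<open>bilinear br\<close>] basis
    unfolding is_basis7_def by blast
  then show False
    using assms(3) by (simp add: two_step_nilpotent_def)
qed

end
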